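(* Let $n\in\mathbb{Z}^+$ with $n\geq 2$ and let $\Psi_n:\mathbb{R}\to\mathbb{R}$ be the polynomial of degree $n+4$ $$\Psi_n(t)=\frac{1}{(n+3)(n+4)}\left(t^{n+4}-1\right)+\frac{1}{n(n+1)}t^2\left(t^n-1\right)-\frac{2}{(n+1)(n+3)}t\left(t^{n+2}-1\right).$$ Then $\Psi_n(t)=\sum_{k=5}^{n+4}\frac{\Psi_n^{(k)}(1)}{k!}(t-1)^k$ for all $t\in\mathbb{R}$, and $\Psi_n^{(k)}(1)>0$ for all $5\leq k\leq n+4$. *)

theory Defs
  imports "HOL-Analysis.Analysis"
begin

definition Psi :: "nat \<Rightarrow> real \<Rightarrow> real" where
  "Psi n t = 1 / (real (n+3) * real (n+4)) * (t ^ (n+4) - 1)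
           + 1 / (real n * real (n+1)) * t\<^sup>2 * (t ^ n - 1)
           - 2 / (real (n+1) * real (n+3)) * t * (t ^ (n+2) - 1)"

end

theory Submission
  imports Defs
begin

(* Expanding every monomial t^m of Psi_n binomially around 1 gives Taylor coefficients
   c_j = p (C(n+4,j) - C(0,j)) + q (C(n+2,j) - C(2,j)) - r (C(n+3,j) - C(1,j)),
   where p, q, r are the three prefactors. By absorption, C(n+2,j) and C(n+3,j) are multiples
   of C(n+4,j), and the combination collapses to
     n (n+1) (n+3) (n+4) c_j = (j-3) (j-4) C(n+4,j)   for j >= 3,
   while c_0 = c_1 = c_2 = 0 by direct computation. So c_j vanishes for j <= 4 and is positive
   for 5 <= j <= n+4; finally c_j = Psi_n^(j)(1) / j!, because the j-th derivative at 1 of a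
   polynomial in t - 1 is j! times its j-th coefficient. *)

lemma binomial_times_diff_eq:
  "(j choose k) * (j - k) = (j choose Suc k) * Suc k"
proof (cases j)
  case (Suc m)
  then show ?thesis
    using binomial_absorb_comp[of j k] times_binomial_minus1_eq[of "Suc k" j] by (simp add: mult.commute)
qed simp

lemma higher_deriv_sum_power_shift:
  fixes c :: "nat \<Rightarrow> 'a::real_normed_field"
  shows "(deriv ^^ k) (\<lambda>t. \<Sum>j\<le>N. c j * (t - a) ^ j)
       = (\<lambda>t. \<Sum>j\<le>N. of_nat (j choose k) * fact k * c j * (t - a) ^ (j - k))"
proof (induction k)
  case (Suc k)
  show ?case
  proof
    fix t :: 'a
    have "((\<lambda>t. \<Sum>j\<le>N. of_nat (j choose k) * fact k * c j * (t - a) ^ (j - k)) has_field_derivative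
          (\<Sum>j\<le>N. of_nat (j choose k) * fact k * c j * (of_nat (j - k) * (t - a) ^ (j - Suc k)))) (at t)"
      by (intro DERIV_sum DERIV_cmult) (auto intro!: derivative_eq_intros simp: diff_diff_left)
    also have "(\<Sum>j\<le>N. of_nat (j choose k) * fact k * c j * (of_nat (j - k) * (t - a) ^ (j - Suc k)))
             = (\<Sum>j\<le>N. of_nat (j choose Suc k) * fact (Suc k) * c j * (t - a) ^ (j - Suc k))"
    proof (intro sum.cong refl)
      fix j
      have "of_nat (j choose k) * fact k * c j * (of_nat (j - k) * (t - a) ^ (j - Suc k))
          = (of_nat (j choose k) * of_nat (j - k)) * (fact k * c j * (t - a) ^ (j - Suc k))"
        by (simp only: mult_ac)
      also have "\<dots> = (of_nat (j choose Suc k) * of_nat (Suc k)) * (fact k * c j * (t - a) ^ (j - Suc k))"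
        by (simp only: binomial_times_diff_eq flip: of_nat_mult)
      also have "\<dots> = of_nat (j choose Suc k) * fact (Suc k) * c j * (t - a) ^ (j - Suc k)"
        by (simp only: fact_Suc mult_ac)
      finally show "of_nat (j choose k) * fact k * c j * (of_nat (j - k) * (t - a) ^ (j - Suc k))
          = of_nat (j choose Suc k) * fact (Suc k) * c j * (t - a) ^ (j - Suc k)" .
    qed
    finally show "(deriv ^^ Suc k) (\<lambda>t. \<Sum>j\<le>N. c j * (t - a) ^ j) t
        = (\<Sum>j\<le>N. of_nat (j choose Suc k) * fact (Suc k) * c j * (t - a) ^ (j - Suc k))"
      using Suc.IH DERIV_imp_deriv by simp
  qed
qed simp

lemma higher_deriv_sum_power_shift_at_center:
  fixes c :: "nat \<Rightarrow> 'a::real_normed_field"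
  assumes "k \<le> N"
  shows "(deriv ^^ k) (\<lambda>t. \<Sum>j\<le>N. c j * (t - a) ^ j) a = fact k * c k"
proof -
  have "(\<Sum>j\<le>N. of_nat (j choose k) * fact k * c j * (a - a) ^ (j - k))
      = (\<Sum>j\<le>N. if j = k then fact k * c k else 0)"
    by (rule sum.cong) (auto simp: binomial_eq_0)
  then show ?thesis
    using assms by (simp add: higher_deriv_sum_power_shift)
qed

lemma power_eq_sum_binomial_shift:
  fixes t a :: "'a::comm_ring_1"
  assumes "m \<le> N"
  shows "t ^ m = (\<Sum>j\<le>N. of_nat (m choose j) * a ^ (m - j) * (t - a) ^ j)"
proof -
  have "t ^ m = ((t - a) + a) ^ m" by simp
  also have "\<dots> = (\<Sum>j\<le>m. of_nat (m choose j) * a ^ (m - j) * (t - a) ^ j)"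
    by (subst binomial_ring) (simp add: mult_ac)
  also have "\<dots> = (\<Sum>j\<le>N. of_nat (m choose j) * a ^ (m - j) * (t - a) ^ j)"
    using assms by (intro sum.mono_neutral_left) (auto simp: binomial_eq_0)
  finally show ?thesis .
qed

lemma of_nat_binomial_absorb_comp:
  "(of_nat m - of_nat k :: 'a::comm_ring_1) * of_nat (m choose k) = of_nat m * of_nat ((m - 1) choose k)"
proof (cases "k \<le> m")
  case True
  then have "(of_nat m - of_nat k :: 'a) * of_nat (m choose k) = of_nat ((m - k) * (m choose k))"
    by (simp add: of_nat_diff)
  then show ?thesis
    by (simp only: binomial_absorb_comp of_nat_mult)
next
  case False
  then show ?thesis by (simp add: binomial_eq_0)
qed

lemma binomial_shifts_combination:
  "real n * (real n + 1) * real (n + 4 choose k) + (real n + 3) * (real n + 4) * real (n + 2 choose k)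
     - 2 * real n * (real n + 4) * real (n + 3 choose k)
   = (real k - 3) * (real k - 4) * real (n + 4 choose k)"
proof -
  \<comment> \<open>with y = n+4-k the left side is (n(n+1) + y(y-1) - 2ny) C(n+4,k), and
      n(n+1) + y(y-1) - 2ny = (n-y)(n-y+1) = (k-4)(k-3)\<close>
  define y where "y = real n + 4 - real k"
  have absorb4: "(real n + 4) * real (n + 3 choose k) = y * real (n + 4 choose k)"
    using of_nat_binomial_absorb_comp[of "n + 4" k, where 'a=real] by (simp add: y_def algebra_simps)
  have absorb3: "(real n + 3) * real (n + 2 choose k) = (y - 1) * real (n + 3 choose k)"
    using of_nat_binomial_absorb_comp[of "n + 3" k, where 'a=real] by (simp add: y_def algebra_simps)
  have "(real n + 3) * (real n + 4) * real (n + 2 choose k)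
      = (real n + 4) * ((real n + 3) * real (n + 2 choose k))"
    by (simp only: mult_ac)
  also have "\<dots> = (y - 1) * ((real n + 4) * real (n + 3 choose k))"
    unfolding absorb3 by (simp only: mult_ac)
  also have "\<dots> = (y - 1) * y * real (n + 4 choose k)"
    unfolding absorb4 by (simp only: mult_ac)
  finally have C2: "(real n + 3) * (real n + 4) * real (n + 2 choose k) = (y - 1) * y * real (n + 4 choose k)" .
  have C3: "2 * real n * (real n + 4) * real (n + 3 choose k) = 2 * real n * y * real (n + 4 choose k)"
    by (simp only: absorb4 mult.assoc)
  show ?thesis
    unfolding C2 C3 y_def by algebra
qed

definition psi_coeff :: "nat \<Rightarrow> nat \<Rightarrow> real" where
  "psi_coeff n j =
       1 / (real (n+3) * real (n+4)) * (real (n + 4 choose j) - real (0 choose j))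
     + 1 / (real n * real (n+1)) * (real (n + 2 choose j) - real (2 choose j))
     - 2 / (real (n+1) * real (n+3)) * (real (n + 3 choose j) - real (1 choose j))"

lemma Psi_eq_sum_psi_coeff: "Psi n t = (\<Sum>j\<le>n+4. psi_coeff n j * (t - 1) ^ j)"
proof -
  define p q r where "p = 1 / (real (n+3) * real (n+4))"
    and "q = 1 / (real n * real (n+1))" and "r = 2 / (real (n+1) * real (n+3))"
  define S where "S m = (\<Sum>j\<le>n+4. real (m choose j) * (t - 1) ^ j)" for m
  have expand: "t ^ m = S m" if "m \<le> n + 4" for m
    using power_eq_sum_binomial_shift[OF that, of t 1] by (simp add: S_def)
  have "Psi n t = p * (t ^ (n+4) - t ^ 0) + q * (t ^ (n+2) - t ^ 2) - r * (t ^ (n+3) - t ^ 1)"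
  proof -
    have "t ^ 2 * (t ^ n - 1) = t ^ (n+2) - t ^ 2" "t * (t ^ (n+2) - 1) = t ^ (n+3) - t ^ 1"
      by (simp_all add: right_diff_distrib power_add eval_nat_numeral mult_ac)
    then show ?thesis
      by (simp only: Psi_def p_def q_def r_def mult.assoc power_0)
  qed
  also have "\<dots> = p * (S (n+4) - S 0) + q * (S (n+2) - S 2) - r * (S (n+3) - S 1)"
    by (simp only: expand le_add1 le_add2 add_le_mono order_refl)
  also have "\<dots> = (\<Sum>j\<le>n+4.
        p * (real (n + 4 choose j) * (t - 1) ^ j - real (0 choose j) * (t - 1) ^ j)
      + q * (real (n + 2 choose j) * (t - 1) ^ j - real (2 choose j) * (t - 1) ^ j)
      - r * (real (n + 3 choose j) * (t - 1) ^ j - real (1 choose j) * (t - 1) ^ j))"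
    by (simp only: S_def sum.distrib sum_subtractf sum_distrib_left [symmetric])
  also have "\<dots> = (\<Sum>j\<le>n+4. psi_coeff n j * (t - 1) ^ j)"
    by (simp only: psi_coeff_def p_def q_def r_def left_diff_distrib distrib_right mult.assoc)
  finally show ?thesis .
qed

lemma psi_coeff_scaled:
  assumes "n \<noteq> 0"
  shows "real n * (real n + 1) * (real n + 3) * (real n + 4) * psi_coeff n j
       = (real j - 3) * (real j - 4) * real (n + 4 choose j)
         - real n * (real n + 1) * real (0 choose j)
         - (real n + 3) * (real n + 4) * real (2 choose j)
         + 2 * real n * (real n + 4) * real (1 choose j)"
proof -
  define D where "D = real n * (real n + 1) * (real n + 3) * (real n + 4)"
  have cancel: "c / u * (v * u) = c * v" if "u \<noteq> 0" for c u v :: real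
    using that by simp
  have D_split: "D = (real n * (real n + 1)) * (real (n+3) * real (n+4))"
    "D = ((real n + 3) * (real n + 4)) * (real n * real (n+1))"
    "D = (real n * (real n + 4)) * (real (n+1) * real (n+3))"
    by (simp_all add: D_def mult_ac)
  have "1 / (real (n+3) * real (n+4)) * D = real n * (real n + 1)"
    by (subst D_split(1), subst cancel) simp_all
  moreover have "1 / (real n * real (n+1)) * D = (real n + 3) * (real n + 4)"
    using assms by (subst D_split(2), subst cancel) simp_all
  moreover have "2 / (real (n+1) * real (n+3)) * D = 2 * real n * (real n + 4)"
    by (subst D_split(3), subst cancel) simp_all
  moreover have "D * (a * X + b * Y - c * Z) = (a * D) * X + (b * D) * Y - (c * D) * Z"
    for a b c X Y Z :: real
    by algebra
  ultimately have "D * psi_coeff n j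
      = real n * (real n + 1) * (real (n + 4 choose j) - real (0 choose j))
      + (real n + 3) * (real n + 4) * (real (n + 2 choose j) - real (2 choose j))
      - 2 * real n * (real n + 4) * (real (n + 3 choose j) - real (1 choose j))"
    unfolding psi_coeff_def by (simp only:)
  then show ?thesis
    using binomial_shifts_combination[of n j] by (simp add: D_def algebra_simps)
qed

lemma psi_coeff_eq_0:
  assumes "n \<noteq> 0" and "j \<le> 4"
  shows "psi_coeff n j = 0"
proof -
  have "2 * (n + 4 choose 2) = (n + 4) * (n + 3 choose 1)"
    using Suc_times_binomial[of 1 "n + 3"] by (simp add: numeral_eq_Suc)
  then have "real (2 * (n + 4 choose 2)) = real ((n + 4) * (n + 3))"
    by simp
  then have "real (n + 4 choose 2) * 2 = (real n + 4) * (real n + 3)"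
    by (simp add: mult.commute)
  moreover have "j = 0 \<or> j = 1 \<or> j = 2 \<or> j = 3 \<or> j = 4"
    using assms(2) by auto
  ultimately have "real n * (real n + 1) * (real n + 3) * (real n + 4) * psi_coeff n j = 0"
    unfolding psi_coeff_scaled[OF assms(1)] by (auto simp: algebra_simps binomial_eq_0)
  then show ?thesis
    using assms(1) by simp
qed

lemma psi_coeff_pos:
  assumes "n \<noteq> 0" and "5 \<le> j" and "j \<le> n + 4"
  shows "psi_coeff n j > 0"
proof -
  have "real n * (real n + 1) * (real n + 3) * (real n + 4) * psi_coeff n j
      = (real j - 3) * (real j - 4) * real (n + 4 choose j)"
    using assms psi_coeff_scaled[OF assms(1), of j] by (simp add: binomial_eq_0)
  moreover have "(real j - 3) * (real j - 4) * real (n + 4 choose j) > 0"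
    using assms by simp
  moreover have "real n * (real n + 1) * (real n + 3) * (real n + 4) > 0"
    using assms(1) by simp
  ultimately show ?thesis
    by (metis zero_less_mult_pos)
qed

theorem lemma2p3:
  fixes n :: nat
  assumes "n \<ge> 2"
  shows "(\<forall>t::real. Psi n t = (\<Sum>k=5..n+4. (deriv ^^ k) (Psi n) 1 / fact k * (t - 1) ^ k))
         \<and> (\<forall>k. 5 \<le> k \<and> k \<le> n + 4 \<longrightarrow> (deriv ^^ k) (Psi n) 1 > 0)"
proof -
  have n: "n \<noteq> 0"
    using assms by simp
  have Psi_eq: "Psi n = (\<lambda>t. \<Sum>j\<le>n+4. psi_coeff n j * (t - 1) ^ j)"
    using Psi_eq_sum_psi_coeff by blast
  have deriv_eq: "(deriv ^^ k) (Psi n) 1 = fact k * psi_coeff n k" if "k \<le> n + 4" for k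
    unfolding Psi_eq using that by (rule higher_deriv_sum_power_shift_at_center)
  have "Psi n t = (\<Sum>k=5..n+4. (deriv ^^ k) (Psi n) 1 / fact k * (t - 1) ^ k)" for t
  proof -
    have "Psi n t = (\<Sum>k=5..n+4. psi_coeff n k * (t - 1) ^ k)"
      unfolding Psi_eq_sum_psi_coeff
      by (rule sum.mono_neutral_right) (auto simp: psi_coeff_eq_0 n)
    then show ?thesis
      by (simp add: deriv_eq)
  qed
  moreover have "(deriv ^^ k) (Psi n) 1 > 0" if "5 \<le> k" "k \<le> n + 4" for k
    using psi_coeff_pos[OF n that] deriv_eq[OF that(2)] by simp
  ultimately show ?thesis
    by blast
qed

end
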